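(* Let $\mathbb P$ be a concept class of generalized propensity scores and $\mathbb D$ a concept class of covariate-outcome distributions. The average treatment effect $\tau_{\mathcal D}$ is identifiable from the censored distribution $\mathcal C_{\mathcal D}$ over the family of all observational studies $\mathcal D$ realizable with respect to $(\mathbb P,\mathbb D)$ if and only if $(\mathbb P,\mathbb D)$ satisfies the Identifiability Condition.
   Context: An observational study is a probability distribution $\mathcal D$ of a random tuple $(X,T,Y(0),Y(1))$ with covariates $X\in\mathbb R^d$, treatment $T\in\{0,1\}$ and potential outcomes $Y(0),Y(1)\in\mathbb R$; the joint laws $\mathcal D_{X,Y(t)}$ of $(X,Y(t))$, $t\in\{0,1\}$, are assumed to have densities, and $\mathcal D_X$ denotes the law of $X$. The censored distribution $\mathcal C_{\mathcal D}$ is the law of $(X,T,Y(T))$. The generalized propensity scores of $\mathcal D$ are $p_t(x,y)=\Pr_{\mathcal D}[T=t\mid X=x,Y(t)=y]$, $t\in\{0,1\}$. The average treatment effect is $\tau_{\mathcal D}=\mathbb E_{\mathcal D}[Y(1)-Y(0)]$. A concept class of generalized propensity scores is a set $\mathbb P$ of functions $\mathbb R^d\times\mathbb R\to[0,1]$; a concept class of covariate-outcome distributions is a set $\mathbb D$ of probability distributions with densities on $\mathbb R^d\times\mathbb R$; for $\mathcal P\in\mathbb D$, $\mathcal P(x,y)$ denotes its density and $\mathcal P_X$ its marginal on $\mathbb R^d$. $\mathcal D$ is realizable with respect to $(\mathbb P,\mathbb D)$ if $p_0,p_1\in\mathbb P$ and $\mathcal D_{X,Y(0)},\mathcal D_{X,Y(1)}\in\mathbb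 D$. A tuple $(p,\mathcal P)\in\mathbb P\times\mathbb D$ is compatible with $(\mathbb P,\mathbb D)$ if there exist $(\hat p,\hat{\mathcal P})\in\mathbb P\times\mathbb D$ and a valid observational study whose $(p_0,p_1,\mathcal D_{X,Y(0)},\mathcal D_{X,Y(1)})$ equals $(p,\hat p,\mathcal P,\hat{\mathcal P})$ (equivalently, $(\hat p,p,\hat{\mathcal P},\mathcal P)$). A quantity $\eta_{\mathcal D}$ is identifiable from $\mathcal C_{\mathcal D}$ over a family of observational studies if there exists a map $f$ from probability distributions on $\mathbb R^d\times\{0,1\}\times\mathbb R$ to $\mathbb R$ with $f(\mathcal C_{\mathcal D})=\eta_{\mathcal D}$ for every $\mathcal D$ in the family. Identifiability Condition: $(\mathbb P,\mathbb D)$ satisfies it if for any two tuples $(p,\mathcal P),(q,\mathcal Q)\in\mathbb P\times\mathbb D$ that are compatible with $(\mathbb P,\mathbb D)$, at least one of the following holds: (1) $\mathbb E_{(x,y)\sim\mathcal P}[y]=\mathbb E_{(x,y)\sim\mathcal Q}[y]$; (2) $\mathcal P_X\neq\mathcal Q_X$; (3) there exists $(x,y)\in\mathrm{supp}(\mathcal P_X)\times\mathbb R$ with $p(x,y)\mathcal P(x,y)\neq q(x,y)\mathcal Q(x,y)$.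
   Formalization: Condition (3) of the Identifiability Condition requires $p(x,y)\mathcal P(x,y)\neq q(x,y)\mathcal Q(x,y)$ on a set of positive Lebesgue measure in $\mathrm{supp}(\mathcal P_X)\times\mathbb R$ rather than at a single point, and observational studies have integrable Y(0) and Y(1). The statement above fails without it. *)

theory Defs
  imports "HOL-Probability.Probability"
begin

text \<open>An observational study is a probability measure on tuples (X, T, Y(0), Y(1)) with
  X in R^d (type real^'d), T in {0,1} (encoded as bool, True = 1), Y(0), Y(1) real.\<close>

type_synonym 'd obs = "(real^'d) \<times> bool \<times> real \<times> real"
type_synonym 'd cens = "(real^'d) \<times> bool \<times> real"
type_synonym 'd cofun = "(real^'d) \<times> real \<Rightarrow> real"

definition obs_space :: "('d::finite) obs measure" where
  "obs_space = borel \<Otimes>\<^sub>M (count_space UNIV \<Otimes>\<^sub>M (borel \<Otimes>\<^sub>M borel))"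

definition cens_space :: "('d::finite) cens measure" where
  "cens_space = borel \<Otimes>\<^sub>M (count_space UNIV \<Otimes>\<^sub>M borel)"

definition censor :: "('d::finite) obs measure \<Rightarrow> 'd cens measure" where
  "censor D = distr D cens_space (\<lambda>(x,t,y0,y1). (x, t, if t then y1 else y0))"

definition ate :: "('d::finite) obs measure \<Rightarrow> real" where
  "ate D = (\<integral>\<omega>. (case \<omega> of (x,t,y0,y1) \<Rightarrow> y1 - y0) \<partial>D)"

text \<open>A covariate-outcome distribution is represented by its (Lebesgue) density.\<close>
definition is_density :: "('d::finite) cofun \<Rightarrow> bool" where
  "is_density f \<longleftrightarrow> f \<in> borel_measurable lborel \<and> (\<forall>z. 0 \<le> f z)
     \<and> (\<integral>\<^sup>+z. ennreal (f z) \<partial>lborel) = 1"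

definition dist_of :: "('d::finite) cofun \<Rightarrow> ((real^'d) \<times> real) measure" where
  "dist_of f = density lborel (\<lambda>z. ennreal (f z))"

definition xy :: "bool \<Rightarrow> ('d::finite) obs \<Rightarrow> (real^'d) \<times> real" where
  "xy t = (\<lambda>(x,s,y0,y1). (x, if t then y1 else y0))"

definition valid_obs :: "('d::finite) obs measure \<Rightarrow> bool" where
  "valid_obs D \<longleftrightarrow> prob_space D \<and> sets D = sets obs_space
     \<and> integrable D (\<lambda>(x,t,y0,y1). y0) \<and> integrable D (\<lambda>(x,t,y0,y1). y1)
     \<and> (\<forall>t. \<exists>f. is_density f \<and> distr D lborel (xy t) = dist_of f)"

text \<open>gps_dens D t p f: f is the density of the law of (X,Y(t)) under D and p is (a version of)
  the generalized propensity score p_t(x,y) = Pr[T = t | X = x, Y(t) = y], i.e.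
  Pr[T = t, (X,Y(t)) in A] = integral over A of p_t * f for all measurable A.\<close>
definition gps_dens :: "('d::finite) obs measure \<Rightarrow> bool \<Rightarrow> 'd cofun \<Rightarrow> 'd cofun \<Rightarrow> bool" where
  "gps_dens D t p f \<longleftrightarrow> is_density f \<and> distr D lborel (xy t) = dist_of f
     \<and> p \<in> borel_measurable lborel
     \<and> (\<forall>A\<in>sets lborel. emeasure D {\<omega>\<in>space D. fst (snd \<omega>) = t \<and> xy t \<omega> \<in> A}
            = (\<integral>\<^sup>+z\<in>A. ennreal (p z * f z) \<partial>lborel))"

definition realizable :: "('d::finite) cofun set \<Rightarrow> 'd cofun set \<Rightarrow> 'd obs measure \<Rightarrow> bool" where
  "realizable PP DD D \<longleftrightarrow> valid_obs D \<and>
     (\<exists>p0 p1 f0 f1. p0 \<in> PP \<and> p1 \<in> PP \<and> f0 \<in> DD \<and> f1 \<in> DD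
        \<and> gps_dens D False p0 f0 \<and> gps_dens D True p1 f1)"

definition compatible :: "('d::finite) cofun set \<Rightarrow> 'd cofun set \<Rightarrow> 'd cofun \<Rightarrow> 'd cofun \<Rightarrow> bool" where
  "compatible PP DD p P \<longleftrightarrow> p \<in> PP \<and> P \<in> DD \<and>
     (\<exists>ph Ph D. ph \<in> PP \<and> Ph \<in> DD \<and> valid_obs D
        \<and> gps_dens D False p P \<and> gps_dens D True ph Ph)"

definition marg :: "('d::finite) cofun \<Rightarrow> (real^'d) measure" where
  "marg f = distr (dist_of f) borel fst"

definition msupp :: "(real^'d::finite) measure \<Rightarrow> (real^'d) set" where
  "msupp \<mu> = {x. \<forall>e>0. emeasure \<mu> (ball x e) \<noteq> 0}"

definition mean_outcome :: "('d::finite) cofun \<Rightarrow> real" where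
  "mean_outcome f = (\<integral>z. snd z \<partial>dist_of f)"

definition identifiability_condition :: "('d::finite) cofun set \<Rightarrow> 'd cofun set \<Rightarrow> bool" where
  "identifiability_condition PP DD \<longleftrightarrow>
     (\<forall>p P q Q. compatible PP DD p P \<longrightarrow> compatible PP DD q Q \<longrightarrow>
        mean_outcome P = mean_outcome Q
        \<or> marg P \<noteq> marg Q
        \<or> \<not> (AE z in lborel. z \<in> msupp (marg P) \<times> UNIV \<longrightarrow> p z * P z = q z * Q z))"

definition ate_identifiable :: "('d::finite) cofun set \<Rightarrow> 'd cofun set \<Rightarrow> bool" where
  "ate_identifiable PP DD \<longleftrightarrow>
     (\<exists>F :: 'd cens measure \<Rightarrow> real. \<forall>D. realizable PP DD D \<longrightarrow> F (censor D) = ate D)"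

end

theory Submission
  imports Defs
begin

text \<open>
  The censored distribution determines, for each arm t, the law of X and the observed
  sub-density p_t f_t of (X, Y(t)) on the event T = t, while the ATE is the difference of the
  two arm means. Both arms of a realizable study are compatible (the treated one after
  relabelling T), so under the identifiability condition these data fix both arm means and the
  ATE is a function of the censored distribution.

  Conversely, let compatible (p, P) and (q, Q) violate the condition, and let D be a study with
  control arm (p, P) and treated arm (p', P'). Since P and Q vanish off the support of the common
  X-marginal, p P = q Q almost everywhere, and comparing X-marginals shows that for almost every
  x the fibres of q Q and (1 - p') P', and of (1 - q) Q and p' P', have equal mass. Coupling Y(0)
  and Y(1) conditionally independently given (X, T) then yields a realizable study with arms
  (q, Q) and (p', P'), the same censored distribution as D, and a different ATE.
\<close>

section \<open>Integrals over products of Euclidean spaces\<close>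

lemma sets_borel_Times_UNIV:
  fixes B :: "'a::second_countable_topology set"
  assumes "B \<in> sets borel"
  shows "B \<times> (UNIV :: 'b::second_countable_topology set) \<in> sets borel"
  by (metis borel_prod pair_measureI sets.top space_borel assms)

lemma borel_measurable_fst [measurable]:
  "fst \<in> borel_measurable
     (borel :: ('a::second_countable_topology \<times> 'b::second_countable_topology) measure)"
  by (simp flip: borel_prod)

lemma borel_measurable_snd [measurable]:
  "snd \<in> borel_measurable
     (borel :: ('a::second_countable_topology \<times> 'b::second_countable_topology) measure)"
  by (simp flip: borel_prod)

lemma nn_integral_lborel_pair:
  fixes h :: "'a::euclidean_space \<times> 'b::euclidean_space \<Rightarrow> ennreal"
  assumes "h \<in> borel_measurable borel"
  shows "(\<integral>\<^sup>+z. h z \<partial>lborel) = (\<integral>\<^sup>+x. \<integral>\<^sup>+y. h (x,y) \<partial>lborel \<partial>lborel)"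
proof -
  have "h \<in> borel_measurable (lborel \<Otimes>\<^sub>M lborel)"
    using assms by (simp add: lborel_prod)
  from lborel.nn_integral_fst[OF this] show ?thesis
    by (simp add: lborel_prod)
qed

lemma set_nn_integral_lborel_pair:
  fixes h :: "'a::euclidean_space \<times> 'b::euclidean_space \<Rightarrow> ennreal"
  assumes [measurable]: "h \<in> borel_measurable borel" "A \<in> sets borel"
  shows "(\<integral>\<^sup>+z\<in>A. h z \<partial>lborel) = (\<integral>\<^sup>+x. \<integral>\<^sup>+y. indicator A (x,y) * h (x,y) \<partial>lborel \<partial>lborel)"
  by (subst nn_integral_lborel_pair) (simp_all add: mult.commute)

lemma borel_measurable_nn_integral_fiber:
  fixes h :: "'a::euclidean_space \<times> 'b::euclidean_space \<Rightarrow> ennreal"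
  assumes "h \<in> borel_measurable borel"
  shows "(\<lambda>x. \<integral>\<^sup>+y. h (x,y) \<partial>lborel) \<in> borel_measurable borel"
proof -
  have "h \<in> borel_measurable (lborel \<Otimes>\<^sub>M lborel)"
    using assms by (simp add: lborel_prod)
  from lborel.borel_measurable_nn_integral_fst[OF this] show ?thesis
    by simp
qed

lemma nn_integral_Times_UNIV:
  fixes h :: "'a::euclidean_space \<times> 'b::euclidean_space \<Rightarrow> ennreal"
  assumes [measurable]: "h \<in> borel_measurable borel" "B \<in> sets borel"
  shows "(\<integral>\<^sup>+z\<in>B \<times> UNIV. h z \<partial>lborel) = (\<integral>\<^sup>+x\<in>B. (\<integral>\<^sup>+y. h (x,y) \<partial>lborel) \<partial>lborel)"
proof -
  have [measurable]: "B \<times> UNIV \<in> sets (borel :: ('a \<times> 'b) measure)"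
    by (rule sets_borel_Times_UNIV) simp
  have "(\<integral>\<^sup>+z\<in>B \<times> UNIV. h z \<partial>lborel) = (\<integral>\<^sup>+x. \<integral>\<^sup>+y. h (x,y) * indicator B x \<partial>lborel \<partial>lborel)"
    by (subst set_nn_integral_lborel_pair) (simp_all add: indicator_def mult.commute)
  also have "\<dots> = (\<integral>\<^sup>+x\<in>B. (\<integral>\<^sup>+y. h (x,y) \<partial>lborel) \<partial>lborel)"
    by (simp add: nn_integral_multc)
  finally show ?thesis .
qed

lemma AE_fiber_nn_integral_eq:
  fixes u v :: "'a::euclidean_space \<times> 'b::euclidean_space \<Rightarrow> ennreal"
  assumes [measurable]: "u \<in> borel_measurable borel" "v \<in> borel_measurable borel"
    and eq: "\<And>B. B \<in> sets borel \<Longrightarrow>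
      (\<integral>\<^sup>+z\<in>B \<times> UNIV. u z \<partial>lborel) = (\<integral>\<^sup>+z\<in>B \<times> UNIV. v z \<partial>lborel)"
  shows "AE x in lborel. (\<integral>\<^sup>+y. u (x,y) \<partial>lborel) = (\<integral>\<^sup>+y. v (x,y) \<partial>lborel)"
proof (rule sigma_finite_measure.density_unique2[OF sigma_finite_lborel])
  show "(\<lambda>x. \<integral>\<^sup>+y. u (x,y) \<partial>lborel) \<in> borel_measurable lborel"
    "(\<lambda>x. \<integral>\<^sup>+y. v (x,y) \<partial>lborel) \<in> borel_measurable lborel"
    using borel_measurable_nn_integral_fiber by simp_all
qed (simp add: eq flip: nn_integral_Times_UNIV)

lemma AE_fiber_nn_integral_finite:
  fixes u :: "'a::euclidean_space \<times> 'b::euclidean_space \<Rightarrow> ennreal"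
  assumes "u \<in> borel_measurable borel" "(\<integral>\<^sup>+z. u z \<partial>lborel) \<noteq> \<top>"
  shows "AE x in lborel. (\<integral>\<^sup>+y. u (x,y) \<partial>lborel) \<noteq> \<top>"
proof -
  have "(\<lambda>x. \<integral>\<^sup>+y. u (x,y) \<partial>lborel) \<in> borel_measurable lborel"
    using borel_measurable_nn_integral_fiber[OF assms(1)] by simp
  moreover have "(\<integral>\<^sup>+x. \<integral>\<^sup>+y. u (x,y) \<partial>lborel \<partial>lborel) \<noteq> \<top>"
    using assms by (simp flip: nn_integral_lborel_pair)
  ultimately show ?thesis
    using nn_integral_PInf_AE[of "\<lambda>x. \<integral>\<^sup>+y. u (x,y) \<partial>lborel" lborel] by simp
qed

lemma nn_integral_split_propensity:
  assumes [measurable]: "p \<in> borel_measurable M" "f \<in> borel_measurable M" "A \<in> sets M"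
    and p: "\<And>z. 0 \<le> p z" "\<And>z. p z \<le> 1" and f: "\<And>z. 0 \<le> f z"
  shows "(\<integral>\<^sup>+z\<in>A. ennreal (f z) \<partial>M)
    = (\<integral>\<^sup>+z\<in>A. ennreal (p z * f z) \<partial>M) + (\<integral>\<^sup>+z\<in>A. ennreal ((1 - p z) * f z) \<partial>M)"
proof -
  have "ennreal (f z) = ennreal (p z * f z) + ennreal ((1 - p z) * f z)" for z
    using p[of z] f[of z] by (subst ennreal_plus[symmetric]) (simp_all add: algebra_simps mult_left_le)
  then show ?thesis
    by (simp add: distrib_right flip: nn_integral_add)
qed

lemma nn_integral_lborel_bool_pair:
  fixes h :: "'a::euclidean_space \<times> bool \<times> 'b::euclidean_space \<times> 'b \<Rightarrow> ennreal"
  assumes h: "h \<in> borel_measurable (lborel \<Otimes>\<^sub>M (count_space UNIV \<Otimes>\<^sub>M (lborel \<Otimes>\<^sub>M lborel)))"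
  shows "integral\<^sup>N (lborel \<Otimes>\<^sub>M (count_space UNIV \<Otimes>\<^sub>M (lborel \<Otimes>\<^sub>M lborel))) h
    = (\<integral>\<^sup>+x. (\<integral>\<^sup>+y0. \<integral>\<^sup>+y1. h (x,False,y0,y1) \<partial>lborel \<partial>lborel)
        + (\<integral>\<^sup>+y0. \<integral>\<^sup>+y1. h (x,True,y0,y1) \<partial>lborel \<partial>lborel) \<partial>lborel)"
proof -
  have sf: "sigma_finite_measure
      (count_space (UNIV :: bool set) \<Otimes>\<^sub>M (lborel \<Otimes>\<^sub>M lborel :: ('b \<times> 'b) measure))"
    by (intro sigma_finite_pair_measure sigma_finite_measure_count_space sigma_finite_lborel)
  have "integral\<^sup>N (lborel \<Otimes>\<^sub>M (count_space UNIV \<Otimes>\<^sub>M (lborel \<Otimes>\<^sub>M lborel))) h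
     = (\<integral>\<^sup>+x. \<integral>\<^sup>+r. h (x,r) \<partial>(count_space UNIV \<Otimes>\<^sub>M (lborel \<Otimes>\<^sub>M lborel)) \<partial>lborel)"
    using sigma_finite_measure.nn_integral_fst[OF sf h] by simp
  also have "\<dots> = (\<integral>\<^sup>+x. (\<integral>\<^sup>+y0. \<integral>\<^sup>+y1. h (x,False,y0,y1) \<partial>lborel \<partial>lborel)
        + (\<integral>\<^sup>+y0. \<integral>\<^sup>+y1. h (x,True,y0,y1) \<partial>lborel \<partial>lborel) \<partial>lborel)"
  proof (rule nn_integral_cong)
    fix x
    have hx: "(\<lambda>r. h (x,r)) \<in> borel_measurable (count_space UNIV \<Otimes>\<^sub>M (lborel \<Otimes>\<^sub>M lborel))"
      using measurable_compose_Pair1[OF _ h] by simp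
    have "(\<integral>\<^sup>+y. h (x,t,y) \<partial>(lborel \<Otimes>\<^sub>M lborel)) = (\<integral>\<^sup>+y0. \<integral>\<^sup>+y1. h (x,t,y0,y1) \<partial>lborel \<partial>lborel)" for t
    proof -
      have "(\<lambda>y. h (x,t,y)) \<in> borel_measurable (lborel \<Otimes>\<^sub>M lborel)"
        using measurable_compose_Pair1[OF _ hx] by simp
      from lborel.nn_integral_fst[OF this] show ?thesis
        by simp
    qed
    then show "(\<integral>\<^sup>+r. h (x,r) \<partial>(count_space UNIV \<Otimes>\<^sub>M (lborel \<Otimes>\<^sub>M lborel)))
      = (\<integral>\<^sup>+y0. \<integral>\<^sup>+y1. h (x,False,y0,y1) \<partial>lborel \<partial>lborel)
        + (\<integral>\<^sup>+y0. \<integral>\<^sup>+y1. h (x,True,y0,y1) \<partial>lborel \<partial>lborel)"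
      using sigma_finite_measure.nn_integral_fst[OF lborel_pair.sigma_finite_measure_axioms hx]
      by (simp add: nn_integral_count_space_finite UNIV_bool)
  qed
  finally show ?thesis .
qed

lemma nn_integral_normalized_product:
  fixes f g :: "'a \<Rightarrow> ennreal"
  assumes [measurable]: "f \<in> borel_measurable M" "g \<in> borel_measurable M"
    and g: "(\<integral>\<^sup>+y. g y \<partial>M) = c" "c \<noteq> \<top>"
    and f: "c = 0 \<Longrightarrow> (\<integral>\<^sup>+y. f y \<partial>M) = 0"
  shows "(\<integral>\<^sup>+y0. \<integral>\<^sup>+y1. (if c = 0 then 0 else f y0 * g y1 / c) \<partial>M \<partial>M) = (\<integral>\<^sup>+y. f y \<partial>M)"
proof (cases "c = 0")
  case False
  have "(\<integral>\<^sup>+y1. f y0 * g y1 / c \<partial>M) = f y0 * c / c" for y0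
    by (simp add: nn_integral_divide nn_integral_cmult g(1))
  also have "f y0 * c / c = f y0" for y0
    using False g(2) by (rule mult_divide_eq_ennreal)
  finally show ?thesis
    using False by simp
qed (use f in simp)

text \<open>Density of (X, Y0, Y1) making Y0 and Y1 conditionally independent given X, with
  (X, Y0) distributed as u and (X, Y1) as v when the fibre masses of u and v agree.
  The case split avoids the ennreal division a / 0 = \<top>.\<close>
definition fiber_coupling ::
  "('a \<times> 'b::euclidean_space \<Rightarrow> ennreal) \<Rightarrow> ('a \<times> 'b \<Rightarrow> ennreal) \<Rightarrow> 'a \<Rightarrow> 'b \<Rightarrow> 'b \<Rightarrow> ennreal"
where
  "fiber_coupling u v x y0 y1 =
     (let c = \<integral>\<^sup>+y. u (x,y) \<partial>lborel in if c = 0 then 0 else u (x,y0) * v (x,y1) / c)"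

lemma fiber_coupling_eq:
  "fiber_coupling u v x y0 y1 = (if (\<integral>\<^sup>+y. u (x,y) \<partial>lborel) = 0 then 0
     else u (x,y0) * v (x,y1) / (\<integral>\<^sup>+y. u (x,y) \<partial>lborel))"
  by (simp add: fiber_coupling_def Let_def)

lemma nn_integral_fiber_coupling_fst:
  fixes u v :: "'a::euclidean_space \<times> 'b::euclidean_space \<Rightarrow> ennreal"
  assumes [measurable]: "u \<in> borel_measurable borel" "v \<in> borel_measurable borel" "A \<in> sets borel"
    and v: "(\<integral>\<^sup>+y. v (x,y) \<partial>lborel) = (\<integral>\<^sup>+y. u (x,y) \<partial>lborel)"
    and u: "(\<integral>\<^sup>+y. u (x,y) \<partial>lborel) \<noteq> \<top>"
  shows "(\<integral>\<^sup>+y0. \<integral>\<^sup>+y1. indicator A (x,y0) * fiber_coupling u v x y0 y1 \<partial>lborel \<partial>lborel)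
    = (\<integral>\<^sup>+y. indicator A (x,y) * u (x,y) \<partial>lborel)"
proof -
  have "(\<integral>\<^sup>+y. u (x,y) \<partial>lborel) = 0 \<Longrightarrow> (\<integral>\<^sup>+y. indicator A (x,y) * u (x,y) \<partial>lborel) = 0"
    using nn_integral_mono[of lborel "\<lambda>y. indicator A (x,y) * u (x,y)" "\<lambda>y. u (x,y)"]
    by (simp add: indicator_def)
  with u v have "(\<integral>\<^sup>+y0. \<integral>\<^sup>+y1. (if (\<integral>\<^sup>+y. u (x,y) \<partial>lborel) = 0 then 0
      else indicator A (x,y0) * u (x,y0) * v (x,y1) / (\<integral>\<^sup>+y. u (x,y) \<partial>lborel)) \<partial>lborel \<partial>lborel)
    = (\<integral>\<^sup>+y. indicator A (x,y) * u (x,y) \<partial>lborel)"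
    by (intro nn_integral_normalized_product) simp_all
  then show ?thesis
    by (simp add: fiber_coupling_eq ennreal_times_divide mult.assoc if_distrib cong: if_cong)
qed

lemma nn_integral_fiber_coupling_snd:
  fixes u v :: "'a::euclidean_space \<times> 'b::euclidean_space \<Rightarrow> ennreal"
  assumes [measurable]: "u \<in> borel_measurable borel" "v \<in> borel_measurable borel" "A \<in> sets borel"
    and v: "(\<integral>\<^sup>+y. v (x,y) \<partial>lborel) = (\<integral>\<^sup>+y. u (x,y) \<partial>lborel)"
    and u: "(\<integral>\<^sup>+y. u (x,y) \<partial>lborel) \<noteq> \<top>"
  shows "(\<integral>\<^sup>+y0. \<integral>\<^sup>+y1. indicator A (x,y1) * fiber_coupling u v x y0 y1 \<partial>lborel \<partial>lborel)
    = (\<integral>\<^sup>+y. indicator A (x,y) * v (x,y) \<partial>lborel)"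
proof -
  have [measurable]: "u \<in> borel_measurable (borel \<Otimes>\<^sub>M borel)" "v \<in> borel_measurable (borel \<Otimes>\<^sub>M borel)"
    "A \<in> sets (borel \<Otimes>\<^sub>M borel)"
    by (simp_all only: borel_prod) measurable
  have meas: "(\<lambda>(y0,y1). indicator A (x,y1) * fiber_coupling u v x y0 y1)
      \<in> borel_measurable (lborel \<Otimes>\<^sub>M lborel)"
    unfolding fiber_coupling_eq by measurable
  have "(\<integral>\<^sup>+y0. \<integral>\<^sup>+y1. indicator A (x,y1) * fiber_coupling u v x y0 y1 \<partial>lborel \<partial>lborel)
    = (\<integral>\<^sup>+y1. \<integral>\<^sup>+y0. indicator A (x,y1) * fiber_coupling u v x y0 y1 \<partial>lborel \<partial>lborel)"
    using lborel_pair.Fubini[OF meas] by simp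
  moreover have "(\<integral>\<^sup>+y. u (x,y) \<partial>lborel) = 0 \<Longrightarrow> (\<integral>\<^sup>+y. indicator A (x,y) * v (x,y) \<partial>lborel) = 0"
    using v nn_integral_mono[of lborel "\<lambda>y. indicator A (x,y) * v (x,y)" "\<lambda>y. v (x,y)"]
    by (simp add: indicator_def)
  with u have "(\<integral>\<^sup>+y1. \<integral>\<^sup>+y0. (if (\<integral>\<^sup>+y. u (x,y) \<partial>lborel) = 0 then 0
      else indicator A (x,y1) * v (x,y1) * u (x,y0) / (\<integral>\<^sup>+y. u (x,y) \<partial>lborel)) \<partial>lborel \<partial>lborel)
    = (\<integral>\<^sup>+y. indicator A (x,y) * v (x,y) \<partial>lborel)"
    by (intro nn_integral_normalized_product) simp_all
  ultimately show ?thesis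
    by (simp add: fiber_coupling_eq ennreal_times_divide mult_ac if_distrib cong: if_cong)
qed

lemma fiber_coupling_marginals:
  fixes u v :: "'a::euclidean_space \<times> 'b::euclidean_space \<Rightarrow> ennreal"
  assumes u: "u \<in> borel_measurable borel" and v: "v \<in> borel_measurable borel"
    and A: "A \<in> sets borel"
    and eq: "AE x in lborel. (\<integral>\<^sup>+y. u (x,y) \<partial>lborel) = (\<integral>\<^sup>+y. v (x,y) \<partial>lborel)"
    and fin: "AE x in lborel. (\<integral>\<^sup>+y. u (x,y) \<partial>lborel) \<noteq> \<top>"
  shows "(\<integral>\<^sup>+x. \<integral>\<^sup>+y0. \<integral>\<^sup>+y1. indicator A (x,y0) * fiber_coupling u v x y0 y1
            \<partial>lborel \<partial>lborel \<partial>lborel) = (\<integral>\<^sup>+z\<in>A. u z \<partial>lborel)"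
    and "(\<integral>\<^sup>+x. \<integral>\<^sup>+y0. \<integral>\<^sup>+y1. indicator A (x,y1) * fiber_coupling u v x y0 y1
            \<partial>lborel \<partial>lborel \<partial>lborel) = (\<integral>\<^sup>+z\<in>A. v z \<partial>lborel)"
proof -
  have "AE x in lborel. (\<integral>\<^sup>+y0. \<integral>\<^sup>+y1. indicator A (x,y0) * fiber_coupling u v x y0 y1 \<partial>lborel \<partial>lborel)
      = (\<integral>\<^sup>+y. indicator A (x,y) * u (x,y) \<partial>lborel)"
    and "AE x in lborel. (\<integral>\<^sup>+y0. \<integral>\<^sup>+y1. indicator A (x,y1) * fiber_coupling u v x y0 y1 \<partial>lborel \<partial>lborel)
      = (\<integral>\<^sup>+y. indicator A (x,y) * v (x,y) \<partial>lborel)"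
    using eq fin
    by (eventually_elim, simp add: nn_integral_fiber_coupling_fst nn_integral_fiber_coupling_snd u v A)+
  then show "(\<integral>\<^sup>+x. \<integral>\<^sup>+y0. \<integral>\<^sup>+y1. indicator A (x,y0) * fiber_coupling u v x y0 y1
      \<partial>lborel \<partial>lborel \<partial>lborel) = (\<integral>\<^sup>+z\<in>A. u z \<partial>lborel)"
    and "(\<integral>\<^sup>+x. \<integral>\<^sup>+y0. \<integral>\<^sup>+y1. indicator A (x,y1) * fiber_coupling u v x y0 y1
      \<partial>lborel \<partial>lborel \<partial>lborel) = (\<integral>\<^sup>+z\<in>A. v z \<partial>lborel)"
    by (simp_all add: nn_integral_cong_AE set_nn_integral_lborel_pair A u v)
qed

section \<open>Densities and the support of the covariate marginal\<close>

lemma is_density_nonneg: "is_density f \<Longrightarrow> 0 \<le> f z"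
  by (cases z) (simp add: is_density_def)

lemma is_density_measurable: "is_density f \<Longrightarrow> f \<in> borel_measurable borel"
  by (simp add: is_density_def)

lemma msupp_Compl_open_null:
  fixes \<mu> :: "(real^'d::finite) measure"
  assumes sets: "sets \<mu> = sets borel"
  shows "open (- msupp \<mu>)" and "emeasure \<mu> (- msupp \<mu>) = 0"
proof -
  define N where "N = {ball x e | x e. 0 < e \<and> emeasure \<mu> (ball x e) = 0}"
  have Compl_msupp: "- msupp \<mu> = \<Union>N"
  proof (intro equalityI subsetI)
    fix y assume "y \<in> - msupp \<mu>"
    then obtain e where "0 < e" "emeasure \<mu> (ball y e) = 0"
      unfolding msupp_def by auto
    then show "y \<in> \<Union>N"
      unfolding N_def by (intro UnionI[of "ball y e"]) auto
  next
    fix y assume "y \<in> \<Union>N"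
    then obtain x e where y: "y \<in> ball x e" and "emeasure \<mu> (ball x e) = 0"
      unfolding N_def by blast
    moreover have "ball y (e - dist x y) \<subseteq> ball x e"
      by (simp add: ball_subset_ball_iff dist_commute)
    ultimately have "emeasure \<mu> (ball y (e - dist x y)) = 0"
      using emeasure_mono[of "ball y (e - dist x y)" "ball x e" \<mu>] sets by simp
    with y show "y \<in> - msupp \<mu>"
      unfolding msupp_def by (auto intro!: exI[of _ "e - dist x y"])
  qed
  have open_N: "\<And>B. B \<in> N \<Longrightarrow> open B"
    unfolding N_def by auto
  then show "open (- msupp \<mu>)"
    unfolding Compl_msupp by auto
  obtain N' where N': "N' \<subseteq> N" "countable N'" "\<Union>N' = \<Union>N"
    using Lindelof[OF open_N] by blast
  have "B \<in> null_sets \<mu>" if B: "B \<in> N'" for B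
  proof -
    obtain x e where "B = ball x e" "emeasure \<mu> (ball x e) = 0"
      using subsetD[OF N'(1) B] unfolding N_def by blast
    then show ?thesis
      using sets by (simp add: null_sets_def)
  qed
  then have "\<Union>N' \<in> null_sets \<mu>"
    using null_sets_UN'[OF N'(2), of "\<lambda>B. B" \<mu>] by simp
  then show "emeasure \<mu> (- msupp \<mu>) = 0"
    by (simp add: Compl_msupp N'(3) null_sets_def)
qed

lemma emeasure_marg_eq_Times_UNIV:
  fixes f :: "('d::finite) cofun"
  assumes "B \<in> sets borel"
  shows "emeasure (marg f) B = emeasure (dist_of f) (B \<times> UNIV)"
proof -
  have "fst \<in> measurable (dist_of f) (borel :: (real^'d) measure)"
    by (simp add: dist_of_def borel_measurable_fst)
  with assms show ?thesis
    by (simp add: marg_def emeasure_distr vimage_fst dist_of_def)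
qed

lemma emeasure_dist_of:
  fixes f :: "('d::finite) cofun"
  assumes f: "is_density f" and A: "A \<in> sets borel"
  shows "emeasure (dist_of f) A = (\<integral>\<^sup>+z\<in>A. ennreal (f z) \<partial>lborel)"
  unfolding dist_of_def using A is_density_measurable[OF f] by (subst emeasure_density) auto

lemma emeasure_marg:
  fixes f :: "('d::finite) cofun"
  assumes f: "is_density f" and B: "B \<in> sets borel"
  shows "emeasure (marg f) B = (\<integral>\<^sup>+z\<in>B \<times> UNIV. ennreal (f z) \<partial>lborel)"
  using emeasure_dist_of[OF f sets_borel_Times_UNIV[OF B]] by (simp add: emeasure_marg_eq_Times_UNIV[OF B])

lemma AE_density_zero_off_msupp:
  fixes f :: "('d::finite) cofun"
  assumes f: "is_density f"
  shows "AE z in lborel. fst z \<notin> msupp (marg f) \<longrightarrow> f z = 0"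
proof -
  note [measurable] = is_density_measurable[OF f]
  have "sets (marg f) = sets borel"
    by (simp add: marg_def)
  note Compl = msupp_Compl_open_null[OF this]
  have [measurable]: "(- msupp (marg f)) \<times> UNIV \<in> sets (borel :: ((real^'d) \<times> real) measure)"
    using Compl(1) by (intro sets_borel_Times_UNIV) simp
  have "(\<integral>\<^sup>+z. ennreal (f z) * indicator ((- msupp (marg f)) \<times> UNIV) z \<partial>lborel) = 0"
    using emeasure_marg[OF f, of "- msupp (marg f)"] Compl by simp
  then have "AE z in lborel. ennreal (f z) * indicator ((- msupp (marg f)) \<times> UNIV) z = 0"
    by (subst (asm) nn_integral_0_iff_AE) simp_all
  then show ?thesis
  proof (rule eventually_mono)
    fix z assume "ennreal (f z) * indicator ((- msupp (marg f)) \<times> UNIV) z = 0"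
    with is_density_nonneg[OF f, of z] show "fst z \<notin> msupp (marg f) \<longrightarrow> f z = 0"
      by (cases z) (auto simp: indicator_def)
  qed
qed

lemma AE_eq_if_AE_eq_on_msupp:
  fixes p q P Q :: "('d::finite) cofun"
  assumes "is_density P" "is_density Q" "marg P = marg Q"
    and "AE z in lborel. z \<in> msupp (marg P) \<times> UNIV \<longrightarrow> p z * P z = q z * Q z"
  shows "AE z in lborel. p z * P z = q z * Q z"
  using assms(4) AE_density_zero_off_msupp[OF assms(1)] AE_density_zero_off_msupp[OF assms(2)]
proof eventually_elim
  case (elim z)
  then show ?case
    by (cases "fst z \<in> msupp (marg P)") (auto simp: assms(3) mem_Times_iff)
qed

section \<open>Arms, censoring and relabelling of observational studies\<close>

lemma sets_obs_space:
  "sets (obs_space :: ('d::finite) obs measure) =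
     sets (lborel \<Otimes>\<^sub>M (count_space UNIV \<Otimes>\<^sub>M (lborel \<Otimes>\<^sub>M lborel)))"
  unfolding obs_space_def by (intro sets_pair_measure_cong) auto

lemma space_obs_space [simp]: "space (obs_space :: ('d::finite) obs measure) = UNIV"
  by (simp add: obs_space_def space_pair_measure)

lemma space_cens_space [simp]: "space (cens_space :: ('d::finite) cens measure) = UNIV"
  by (simp add: cens_space_def space_pair_measure)

lemma space_eq_UNIV_if_sets_obs_space:
  fixes D :: "('d::finite) obs measure"
  shows "sets D = sets obs_space \<Longrightarrow> space D = UNIV"
  using sets_eq_imp_space_eq by fastforce

lemma measurable_xy [measurable]: "xy t \<in> borel_measurable (obs_space :: ('d::finite) obs measure)"
  unfolding xy_def obs_space_def by (cases t) auto

lemma measurable_censoring [measurable]: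
  "(\<lambda>(x,t,y0,y1). (x, t, if t then y1 else y0))
     \<in> measurable (obs_space :: ('d::finite) obs measure) cens_space"
  unfolding obs_space_def cens_space_def by measurable

lemma measurable_from_obs_space:
  fixes D :: "('d::finite) obs measure"
  assumes "sets D = sets obs_space" "f \<in> measurable obs_space M"
  shows "f \<in> measurable D M"
  using assms measurable_cong_sets by blast

definition arm_set :: "bool \<Rightarrow> bool \<Rightarrow> ((real^'d::finite) \<times> real) set \<Rightarrow> 'd obs set" where
  "arm_set t s A = {\<omega>. fst (snd \<omega>) = t \<and> xy s \<omega> \<in> A}"

lemma arm_set_sets:
  "A \<in> sets borel \<Longrightarrow> arm_set t s A \<in> sets (obs_space :: ('d::finite) obs measure)"
proof -
  assume [measurable]: "A \<in> sets borel"
  have [measurable]: "(\<lambda>\<omega>::'d obs. fst (snd \<omega>)) \<in> measurable obs_space (count_space UNIV)"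
    unfolding obs_space_def by measurable
  have "{\<omega> \<in> space obs_space. fst (snd \<omega>) = t \<and> xy s \<omega> \<in> A} \<in> sets (obs_space :: 'd obs measure)"
    by measurable
  then show ?thesis
    by (simp add: arm_set_def)
qed

lemma arm_set_Times_UNIV: "arm_set t s (B \<times> UNIV) = arm_set t t (B \<times> UNIV)"
  by (auto simp: arm_set_def xy_def)

lemma emeasure_arm_set_gps_dens:
  fixes D :: "('d::finite) obs measure"
  assumes "sets D = sets obs_space" "gps_dens D t p f" "A \<in> sets borel"
  shows "emeasure D (arm_set t t A) = (\<integral>\<^sup>+z\<in>A. ennreal (p z * f z) \<partial>lborel)"
  using assms space_eq_UNIV_if_sets_obs_space[OF assms(1)]
  by (simp add: gps_dens_def arm_set_def)

lemma gps_densI: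
  fixes D :: "('d::finite) obs measure"
  assumes D: "sets D = sets obs_space" and f: "is_density f" "distr D lborel (xy t) = dist_of f"
    and p: "p \<in> borel_measurable borel"
    and arm: "\<And>A. A \<in> sets borel \<Longrightarrow> emeasure D (arm_set t t A) = (\<integral>\<^sup>+z\<in>A. ennreal (p z * f z) \<partial>lborel)"
  shows "gps_dens D t p f"
  using assms space_eq_UNIV_if_sets_obs_space[OF D] by (simp add: gps_dens_def arm_set_def)

lemma set_nn_integral_gps_dens_finite:
  fixes D :: "('d::finite) obs measure"
  assumes D: "valid_obs D" and g: "gps_dens D t p f" and A: "A \<in> sets borel"
  shows "(\<integral>\<^sup>+z\<in>A. ennreal (p z * f z) \<partial>lborel) \<noteq> \<top>"
proof -
  have "prob_space D" "sets D = sets obs_space"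
    using D by (simp_all add: valid_obs_def)
  then show ?thesis
    using emeasure_arm_set_gps_dens[OF _ g A] prob_space.emeasure_le_1
    by (metis ennreal_one_less_top linorder_not_le)
qed

lemma emeasure_distr_xy:
  fixes D :: "('d::finite) obs measure"
  assumes D: "sets D = sets obs_space" and A: "A \<in> sets borel"
  shows "emeasure (distr D lborel (xy s)) A = emeasure D (arm_set False s A) + emeasure D (arm_set True s A)"
proof -
  have "xy s -` A \<inter> space D = arm_set False s A \<union> arm_set True s A"
    using space_eq_UNIV_if_sets_obs_space[OF D] by (auto simp: arm_set_def)
  then have "emeasure (distr D lborel (xy s)) A = emeasure D (arm_set False s A \<union> arm_set True s A)"
    using A measurable_from_obs_space[OF D measurable_xy] by (simp add: emeasure_distr)
  also have "\<dots> = emeasure D (arm_set False s A) + emeasure D (arm_set True s A)"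
  proof (rule plus_emeasure[symmetric])
    show "arm_set False s A \<in> sets D" "arm_set True s A \<in> sets D"
      using arm_set_sets[OF A] D by simp_all
  qed (auto simp: arm_set_def)
  finally show ?thesis .
qed

lemma emeasure_marg_arms:
  fixes D :: "('d::finite) obs measure"
  assumes D: "sets D = sets obs_space" and f: "distr D lborel (xy s) = dist_of f"
    and g0: "gps_dens D False p0 f0" and g1: "gps_dens D True p1 f1" and B: "B \<in> sets borel"
  shows "emeasure (marg f) B = (\<integral>\<^sup>+z\<in>B \<times> UNIV. ennreal (p0 z * f0 z) \<partial>lborel)
    + (\<integral>\<^sup>+z\<in>B \<times> UNIV. ennreal (p1 z * f1 z) \<partial>lborel)"
proof -
  have BU: "B \<times> UNIV \<in> sets (borel :: ((real^'d) \<times> real) measure)"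
    using B by (rule sets_borel_Times_UNIV)
  have "emeasure (marg f) B = emeasure (distr D lborel (xy s)) (B \<times> UNIV)"
    by (simp add: emeasure_marg_eq_Times_UNIV[OF B] f)
  also have "\<dots> = emeasure D (arm_set False False (B \<times> UNIV)) + emeasure D (arm_set True True (B \<times> UNIV))"
    using emeasure_distr_xy[OF D BU] arm_set_Times_UNIV by metis
  finally show ?thesis
    by (simp add: emeasure_arm_set_gps_dens[OF D g0 BU] emeasure_arm_set_gps_dens[OF D g1 BU])
qed

lemma set_nn_integral_arm_complement:
  fixes D :: "('d::finite) obs measure"
  assumes D: "valid_obs D" and g0: "gps_dens D False p0 f0" and g1: "gps_dens D True p1 f1"
    and p1: "\<And>z. 0 \<le> p1 z" "\<And>z. p1 z \<le> 1" and B: "B \<in> sets borel"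
  shows "(\<integral>\<^sup>+z\<in>B \<times> UNIV. ennreal ((1 - p1 z) * f1 z) \<partial>lborel)
    = (\<integral>\<^sup>+z\<in>B \<times> UNIV. ennreal (p0 z * f0 z) \<partial>lborel)"
proof -
  have sets: "sets D = sets obs_space"
    using D by (simp add: valid_obs_def)
  have f1: "is_density f1" "distr D lborel (xy True) = dist_of f1" "p1 \<in> borel_measurable borel"
    using g1 by (simp_all add: gps_dens_def)
  have BU: "B \<times> UNIV \<in> sets (borel :: ((real^'d) \<times> real) measure)"
    using B by (rule sets_borel_Times_UNIV)
  have "(\<integral>\<^sup>+z\<in>B \<times> UNIV. ennreal (p1 z * f1 z) \<partial>lborel) + (\<integral>\<^sup>+z\<in>B \<times> UNIV. ennreal ((1 - p1 z) * f1 z) \<partial>lborel)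
    = emeasure (marg f1) B"
    using nn_integral_split_propensity[of p1 lborel f1 "B \<times> UNIV"] f1 p1 BU is_density_nonneg[OF f1(1)]
      is_density_measurable[OF f1(1)] emeasure_marg[OF f1(1) B]
    by simp
  also have "\<dots> = (\<integral>\<^sup>+z\<in>B \<times> UNIV. ennreal (p1 z * f1 z) \<partial>lborel)
    + (\<integral>\<^sup>+z\<in>B \<times> UNIV. ennreal (p0 z * f0 z) \<partial>lborel)"
    by (simp add: emeasure_marg_arms[OF sets f1(2) g0 g1 B] add.commute)
  finally show ?thesis
    using set_nn_integral_gps_dens_finite[OF D g1 BU] by (simp add: ennreal_add_left_cancel)
qed

lemma marg_eq_distr_fst:
  fixes D :: "('d::finite) obs measure"
  assumes D: "sets D = sets obs_space" and f: "distr D lborel (xy t) = dist_of f"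
  shows "marg f = distr D borel fst"
proof -
  have "marg f = distr D borel (fst \<circ> xy t)"
    unfolding marg_def f[symmetric]
    by (rule distr_distr) (simp_all add: measurable_from_obs_space[OF D measurable_xy])
  also have "fst \<circ> xy t = fst"
    by (auto simp: xy_def)
  finally show ?thesis .
qed

lemma snd_xy:
  "(\<lambda>\<omega>. snd (xy False \<omega>)) = (\<lambda>(x,t,y0,y1). y0)" "(\<lambda>\<omega>. snd (xy True \<omega>)) = (\<lambda>(x,t,y0,y1). y1)"
  by (auto simp: xy_def)

lemma integrable_dist_of_snd_iff:
  fixes D :: "('d::finite) obs measure"
  assumes D: "sets D = sets obs_space" and f: "distr D lborel (xy t) = dist_of f"
  shows "integrable (dist_of f) snd \<longleftrightarrow> integrable D (\<lambda>\<omega>. snd (xy t \<omega>))"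
  unfolding f[symmetric]
  by (rule integrable_distr_eq) (simp_all add: measurable_from_obs_space[OF D measurable_xy])

lemma mean_outcome_eq_integral:
  fixes D :: "('d::finite) obs measure"
  assumes D: "sets D = sets obs_space" and f: "distr D lborel (xy t) = dist_of f"
  shows "mean_outcome f = (\<integral>\<omega>. snd (xy t \<omega>) \<partial>D)"
  unfolding mean_outcome_def f[symmetric]
  by (rule integral_distr) (simp_all add: measurable_from_obs_space[OF D measurable_xy])

lemma ate_eq_mean_outcome_diff:
  fixes D :: "('d::finite) obs measure"
  assumes D: "valid_obs D"
    and f0: "distr D lborel (xy False) = dist_of f0" and f1: "distr D lborel (xy True) = dist_of f1"
  shows "ate D = mean_outcome f1 - mean_outcome f0"
proof -
  have "sets D = sets obs_space" "integrable D (\<lambda>(x,t,y0,y1). y0)" "integrable D (\<lambda>(x,t,y0,y1). y1)"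
    using D by (simp_all add: valid_obs_def)
  with mean_outcome_eq_integral[OF _ f0] mean_outcome_eq_integral[OF _ f1] show ?thesis
    unfolding ate_def snd_xy by (simp add: case_prod_beta' flip: Bochner_Integration.integral_diff)
qed

lemma distr_xy_eq_dist_ofI:
  fixes D :: "('d::finite) obs measure"
  assumes D: "sets D = sets obs_space" and f: "is_density f"
    and arms: "\<And>A. A \<in> sets borel \<Longrightarrow>
      emeasure D (arm_set False s A) + emeasure D (arm_set True s A) = (\<integral>\<^sup>+z\<in>A. ennreal (f z) \<partial>lborel)"
  shows "distr D lborel (xy s) = dist_of f"
proof (rule measure_eqI)
  fix A assume "A \<in> sets (distr D lborel (xy s))"
  then have "A \<in> sets borel"
    by simp
  then show "emeasure (distr D lborel (xy s)) A = emeasure (dist_of f) A"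
    by (simp add: emeasure_distr_xy[OF D] emeasure_dist_of[OF f] arms)
qed (simp add: dist_of_def)

lemma valid_obsI:
  fixes D :: "('d::finite) obs measure"
  assumes D: "sets D = sets obs_space"
    and f0: "is_density f0" "integrable (dist_of f0) snd" "distr D lborel (xy False) = dist_of f0"
    and f1: "is_density f1" "integrable (dist_of f1) snd" "distr D lborel (xy True) = dist_of f1"
  shows "valid_obs D"
proof -
  have "emeasure D (space D) = emeasure (distr D lborel (xy False)) UNIV"
    using measurable_from_obs_space[OF D measurable_xy] by (simp add: emeasure_distr)
  also have "\<dots> = 1"
    using f0 by (simp add: emeasure_dist_of is_density_def)
  finally have "prob_space D"
    by (rule prob_spaceI)
  then show ?thesis
    using D f0 f1 integrable_dist_of_snd_iff[OF D f0(3)] integrable_dist_of_snd_iff[OF D f1(3)]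
    unfolding valid_obs_def snd_xy by (metis (full_types))
qed

lemma cens_arm_set_sets [measurable]:
  "A \<in> sets borel \<Longrightarrow>
    {c. fst (snd c) = t \<and> (fst c, snd (snd c)) \<in> A} \<in> sets (cens_space :: ('d::finite) cens measure)"
proof -
  assume [measurable]: "A \<in> sets borel"
  have [measurable]: "(\<lambda>c::'d cens. fst (snd c)) \<in> measurable cens_space (count_space UNIV)"
    "(\<lambda>c::'d cens. (fst c, snd (snd c))) \<in> borel_measurable cens_space"
    unfolding cens_space_def by measurable
  have "{c \<in> space cens_space. fst (snd c) = t \<and> (fst c, snd (snd c)) \<in> A}
      \<in> sets (cens_space :: 'd cens measure)"
    by measurable
  then show ?thesis
    by simp
qed

lemma emeasure_censor:
  fixes D :: "('d::finite) obs measure"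
  assumes D: "sets D = sets obs_space" and A: "A \<in> sets borel"
  shows "emeasure (censor D) {c. fst (snd c) = t \<and> (fst c, snd (snd c)) \<in> A} = emeasure D (arm_set t t A)"
proof -
  have "(\<lambda>(x,t,y0,y1). (x, t, if t then y1 else y0)) -`
      {c. fst (snd c) = t \<and> (fst c, snd (snd c)) \<in> A} \<inter> space D = arm_set t t A"
    using space_eq_UNIV_if_sets_obs_space[OF D] by (auto simp: arm_set_def xy_def)
  then show ?thesis
    unfolding censor_def using A
    by (simp add: emeasure_distr[OF measurable_from_obs_space[OF D measurable_censoring]])
qed

lemma cens_section_sets:
  assumes "S \<in> sets (cens_space :: ('d::finite) cens measure)"
  shows "(\<lambda>(x,y). (x,t,y)) -` S \<in> sets (borel :: ((real^'d) \<times> real) measure)"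
proof -
  have "(\<lambda>(x,y). (x,t,y)) \<in> measurable (borel \<Otimes>\<^sub>M borel) (cens_space :: 'd cens measure)"
    unfolding cens_space_def by measurable
  then have "(\<lambda>(x,y). (x,t,y)) \<in> measurable borel (cens_space :: 'd cens measure)"
    by (simp add: borel_prod)
  from measurable_sets[OF this assms] show ?thesis
    by simp
qed

lemma emeasure_censor_eq_arm_sets:
  fixes D :: "('d::finite) obs measure"
  assumes D: "sets D = sets obs_space" and S: "S \<in> sets cens_space"
  shows "emeasure (censor D) S = emeasure D (arm_set False False ((\<lambda>(x,y). (x,False,y)) -` S))
    + emeasure D (arm_set True True ((\<lambda>(x,y). (x,True,y)) -` S))"
proof -
  define S' where "S' t = (\<lambda>(x,y). (x,t,y)) -` S" for t
  have [measurable]: "S' t \<in> sets borel" for t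
    unfolding S'_def by (rule cens_section_sets[OF S])
  define C where "C t = {c :: 'd cens. fst (snd c) = t \<and> (fst c, snd (snd c)) \<in> S' t}" for t
  have C: "C t \<in> sets (censor D)" "emeasure (censor D) (C t) = emeasure D (arm_set t t (S' t))" for t
    unfolding C_def by (simp add: censor_def) (rule emeasure_censor[OF D], simp)
  have "S = C False \<union> C True"
    by (auto simp: C_def S'_def) (metis (full_types))
  moreover have "C False \<inter> C True = {}"
    by (auto simp: C_def)
  ultimately show ?thesis
    using plus_emeasure[OF C(1) C(1)] by (simp add: C(2) S'_def)
qed

lemma censor_eq_iff_arm_sets_eq:
  fixes D D' :: "('d::finite) obs measure"
  assumes D: "sets D = sets obs_space" and D': "sets D' = sets obs_space"
  shows "censor D = censor D' \<longleftrightarrow>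
    (\<forall>t. \<forall>A \<in> sets borel. emeasure D (arm_set t t A) = emeasure D' (arm_set t t A))"
proof
  assume "censor D = censor D'"
  then show "\<forall>t. \<forall>A \<in> sets borel. emeasure D (arm_set t t A) = emeasure D' (arm_set t t A)"
    by (simp flip: emeasure_censor[OF D] emeasure_censor[OF D'])
next
  assume arms: "\<forall>t. \<forall>A \<in> sets borel. emeasure D (arm_set t t A) = emeasure D' (arm_set t t A)"
  show "censor D = censor D'"
  proof (intro measure_eqI)
    fix S assume "S \<in> sets (censor D)"
    then have S: "S \<in> sets cens_space"
      by (simp add: censor_def)
    with arms show "emeasure (censor D) S = emeasure (censor D') S"
      by (simp add: emeasure_censor_eq_arm_sets[OF D S] emeasure_censor_eq_arm_sets[OF D' S]
          cens_section_sets)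
  qed (simp add: censor_def)
qed

lemma distr_fst_censor:
  fixes D :: "('d::finite) obs measure"
  assumes D: "sets D = sets obs_space"
  shows "distr (censor D) borel fst = distr D borel fst"
proof -
  have "distr (censor D) borel fst = distr D borel (fst \<circ> (\<lambda>(x,t,y0,y1). (x, t, if t then y1 else y0)))"
    unfolding censor_def
    using measurable_from_obs_space[OF D measurable_censoring]
    by (intro distr_distr) (simp_all add: cens_space_def)
  also have "fst \<circ> (\<lambda>(x::real^'d, t::bool, y0::real, y1::real). (x, t, if t then y1 else y0)) = fst"
    by auto
  finally show ?thesis .
qed

lemma AE_arm_density_eq_if_censor_eq:
  fixes D D' :: "('d::finite) obs measure"
  assumes D: "sets D = sets obs_space" and D': "sets D' = sets obs_space"
    and censor: "censor D = censor D'"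
    and g: "gps_dens D t p f" and g': "gps_dens D' t p' f'"
    and nonneg: "\<And>z. 0 \<le> p z * f z" "\<And>z. 0 \<le> p' z * f' z"
  shows "AE z in lborel. p z * f z = p' z * f' z"
proof -
  have [measurable]: "p \<in> borel_measurable borel" "f \<in> borel_measurable borel"
    "p' \<in> borel_measurable borel" "f' \<in> borel_measurable borel"
    using g g' by (simp_all add: gps_dens_def is_density_def)
  have "AE z in lborel. ennreal (p z * f z) = ennreal (p' z * f' z)"
  proof (rule sigma_finite_measure.density_unique2[OF sigma_finite_lborel])
    fix A :: "((real^'d) \<times> real) set" assume "A \<in> sets lborel"
    then show "(\<integral>\<^sup>+z\<in>A. ennreal (p z * f z) \<partial>lborel) = (\<integral>\<^sup>+z\<in>A. ennreal (p' z * f' z) \<partial>lborel)"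
      using censor censor_eq_iff_arm_sets_eq[OF D D']
      by (simp flip: emeasure_arm_set_gps_dens[OF D g] emeasure_arm_set_gps_dens[OF D' g'])
  qed simp_all
  then show ?thesis
    by (rule eventually_mono) (use nonneg in simp)
qed

definition swap_arms :: "('d::finite) obs \<Rightarrow> 'd obs" where
  "swap_arms = (\<lambda>(x,t,y0,y1). (x, \<not> t, y1, y0))"

lemma measurable_swap_arms [measurable]:
  "swap_arms \<in> measurable (obs_space :: ('d::finite) obs measure) obs_space"
  unfolding swap_arms_def obs_space_def by measurable

lemma xy_swap_arms [simp]: "xy t (swap_arms \<omega>) = xy (\<not> t) \<omega>"
  by (cases \<omega>) (simp add: xy_def swap_arms_def)

lemma distr_xy_swap_arms:
  fixes D :: "('d::finite) obs measure"
  assumes D: "sets D = sets obs_space"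
  shows "distr (distr D obs_space swap_arms) lborel (xy t) = distr D lborel (xy (\<not> t))"
proof -
  have "distr (distr D obs_space swap_arms) lborel (xy t) = distr D lborel (xy t \<circ> swap_arms)"
    using measurable_from_obs_space[OF D measurable_swap_arms] by (intro distr_distr) simp_all
  also have "xy t \<circ> swap_arms = xy (\<not> t)"
    by (simp add: comp_def)
  finally show ?thesis .
qed

lemma valid_obs_swap_arms:
  fixes D :: "('d::finite) obs measure"
  assumes D: "valid_obs D"
  shows "valid_obs (distr D obs_space swap_arms)"
proof -
  have sets: "sets D = sets obs_space"
    using D by (simp add: valid_obs_def)
  note swap = measurable_from_obs_space[OF sets measurable_swap_arms]
  have "integrable D (\<lambda>\<omega>. snd (xy s \<omega>))" for s
    using D by (cases s) (simp_all add: valid_obs_def snd_xy)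
  then have int: "integrable (distr D obs_space swap_arms) (\<lambda>\<omega>. snd (xy t \<omega>))" for t
    by (subst integrable_distr_eq[OF swap]) simp_all
  show ?thesis
    unfolding valid_obs_def
  proof (intro conjI allI)
    show "prob_space (distr D obs_space swap_arms)"
      using D prob_space.prob_space_distr[OF _ swap] by (simp add: valid_obs_def)
    show "integrable (distr D obs_space swap_arms) (\<lambda>(x,t,y0,y1). y0)"
      "integrable (distr D obs_space swap_arms) (\<lambda>(x,t,y0,y1). y1)"
      using int[of False] int[of True] by (simp_all add: snd_xy)
    show "\<exists>f. is_density f \<and> distr (distr D obs_space swap_arms) lborel (xy t) = dist_of f" for t
      using D distr_xy_swap_arms[OF sets] by (simp add: valid_obs_def)
  qed simp
qed

lemma gps_dens_swap_arms:
  fixes D :: "('d::finite) obs measure"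
  assumes D: "sets D = sets obs_space" and g: "gps_dens D t p f"
  shows "gps_dens (distr D obs_space swap_arms) (\<not> t) p f"
proof -
  note swap = measurable_from_obs_space[OF D measurable_swap_arms]
  have "emeasure (distr D obs_space swap_arms) (arm_set (\<not> t) (\<not> t) A) = emeasure D (arm_set t t A)"
    if "A \<in> sets borel" for A
  proof -
    have "swap_arms -` arm_set (\<not> t) (\<not> t) A \<inter> space D = arm_set t t A"
      using space_eq_UNIV_if_sets_obs_space[OF D] by (auto simp: arm_set_def swap_arms_def xy_def)
    then show ?thesis
      using arm_set_sets[OF that] by (simp add: emeasure_distr[OF swap])
  qed
  then show ?thesis
    using g distr_xy_swap_arms[OF D, of "\<not> t"] space_eq_UNIV_if_sets_obs_space[OF D]
    unfolding gps_dens_def by (simp add: arm_set_def)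
qed

text \<open>The treated arm of a study is the control arm of the study with T relabelled.\<close>
lemma compatible_arms:
  assumes D: "valid_obs D" and g0: "gps_dens D False p0 f0" and g1: "gps_dens D True p1 f1"
    and "p0 \<in> PP" "p1 \<in> PP" "f0 \<in> DD" "f1 \<in> DD"
  shows "compatible PP DD p0 f0" and "compatible PP DD p1 f1"
proof -
  have sets: "sets D = sets obs_space"
    using D by (simp add: valid_obs_def)
  show "compatible PP DD p0 f0"
    unfolding compatible_def using assms by blast
  show "compatible PP DD p1 f1"
    unfolding compatible_def
    using assms valid_obs_swap_arms[OF D] gps_dens_swap_arms[OF sets g0] gps_dens_swap_arms[OF sets g1]
    by fastforce
qed

section \<open>Sufficiency of the identifiability condition\<close>

lemma ate_eq_if_censor_eq:
  fixes PP DD :: "('d::finite) cofun set"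
  assumes PP: "\<forall>p\<in>PP. \<forall>z. 0 \<le> p z \<and> p z \<le> 1" and IC: "identifiability_condition PP DD"
    and r: "realizable PP DD D" and r': "realizable PP DD D'" and censor: "censor D = censor D'"
  shows "ate D = ate D'"
proof -
  obtain p0 p1 f0 f1 where D: "valid_obs D"
    and g0: "gps_dens D False p0 f0" and g1: "gps_dens D True p1 f1"
    and in_classes: "p0 \<in> PP" "p1 \<in> PP" "f0 \<in> DD" "f1 \<in> DD"
    using r unfolding realizable_def by blast
  obtain p0' p1' f0' f1' where D': "valid_obs D'"
    and g0': "gps_dens D' False p0' f0'" and g1': "gps_dens D' True p1' f1'"
    and in_classes': "p0' \<in> PP" "p1' \<in> PP" "f0' \<in> DD" "f1' \<in> DD"
    using r' unfolding realizable_def by blast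
  have sets: "sets D = sets obs_space" "sets D' = sets obs_space"
    using D D' by (simp_all add: valid_obs_def)
  have same_mean: "mean_outcome f = mean_outcome f'"
    if g: "gps_dens D t p f" and g': "gps_dens D' t p' f'"
      and c: "compatible PP DD p f" and c': "compatible PP DD p' f'" for t p f p' f'
  proof -
    have "marg f = marg f'"
      using g g' censor marg_eq_distr_fst[OF sets(1)] marg_eq_distr_fst[OF sets(2)]
        distr_fst_censor[OF sets(1)] distr_fst_censor[OF sets(2)]
      unfolding gps_dens_def by metis
    moreover have "0 \<le> p z * f z" "0 \<le> p' z * f' z" for z
      using PP c c' g g' unfolding compatible_def gps_dens_def is_density_def
      by (metis zero_le_mult_iff)+
    then have "AE z in lborel. p z * f z = p' z * f' z"
      using AE_arm_density_eq_if_censor_eq[OF sets censor g g'] by blast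
    then have "AE z in lborel. z \<in> msupp (marg f) \<times> UNIV \<longrightarrow> p z * f z = p' z * f' z"
      by (rule eventually_mono) simp
    ultimately show ?thesis
      using IC c c' unfolding identifiability_condition_def by blast
  qed
  have "mean_outcome f0 = mean_outcome f0'" "mean_outcome f1 = mean_outcome f1'"
    using same_mean[OF g0 g0'] same_mean[OF g1 g1'] compatible_arms[OF D g0 g1 in_classes]
      compatible_arms[OF D' g0' g1' in_classes'] by simp_all
  then show ?thesis
    using ate_eq_mean_outcome_diff[OF D] ate_eq_mean_outcome_diff[OF D'] g0 g1 g0' g1'
    unfolding gps_dens_def by simp
qed

lemma ate_identifiable_if_identifiability_condition:
  fixes PP DD :: "('d::finite) cofun set"
  assumes "\<forall>p\<in>PP. \<forall>z. 0 \<le> p z \<and> p z \<le> 1" and "identifiability_condition PP DD"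
  shows "ate_identifiable PP DD"
proof -
  define F where "F C = (SOME a. \<exists>D. realizable PP DD D \<and> censor D = C \<and> ate D = a)"
    for C :: "'d cens measure"
  have "F (censor D) = ate D" if r: "realizable PP DD D" for D
  proof -
    have "\<exists>D'. realizable PP DD D' \<and> censor D' = censor D \<and> ate D' = F (censor D)"
      unfolding F_def by (rule someI_ex) (use r in blast)
    then show ?thesis
      using ate_eq_if_censor_eq[OF assms r] by metis
  qed
  then show ?thesis
    unfolding ate_identifiable_def by blast
qed

section \<open>Necessity of the identifiability condition\<close>

definition coupled_obs ::
  "(bool \<Rightarrow> (real^'d::finite) \<times> real \<Rightarrow> ennreal) \<Rightarrow> (bool \<Rightarrow> (real^'d) \<times> real \<Rightarrow> ennreal)
     \<Rightarrow> 'd obs measure"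
where
  "coupled_obs u v = density (lborel \<Otimes>\<^sub>M (count_space UNIV \<Otimes>\<^sub>M (lborel \<Otimes>\<^sub>M lborel)))
     (\<lambda>(x,t,y0,y1). fiber_coupling (u t) (v t) x y0 y1)"

lemma sets_coupled_obs: "sets (coupled_obs u v) = sets obs_space"
  by (simp add: coupled_obs_def sets_obs_space)

lemma emeasure_coupled_obs:
  fixes u v :: "bool \<Rightarrow> (real^'d::finite) \<times> real \<Rightarrow> ennreal"
  assumes u: "\<And>t. u t \<in> borel_measurable borel" and v: "\<And>t. v t \<in> borel_measurable borel"
    and eq: "\<And>t. AE x in lborel. (\<integral>\<^sup>+y. u t (x,y) \<partial>lborel) = (\<integral>\<^sup>+y. v t (x,y) \<partial>lborel)"
    and fin: "\<And>t. AE x in lborel. (\<integral>\<^sup>+y. u t (x,y) \<partial>lborel) \<noteq> \<top>"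
    and A: "A \<in> sets borel"
  shows "emeasure (coupled_obs u v) (arm_set t False A) = (\<integral>\<^sup>+z\<in>A. u t z \<partial>lborel)"
    and "emeasure (coupled_obs u v) (arm_set t True A) = (\<integral>\<^sup>+z\<in>A. v t z \<partial>lborel)"
proof -
  have [measurable]: "u t \<in> borel_measurable (borel \<Otimes>\<^sub>M borel)" "v t \<in> borel_measurable (borel \<Otimes>\<^sub>M borel)"
    "(\<lambda>x. \<integral>\<^sup>+y. u t (x,y) \<partial>lborel) \<in> borel_measurable borel" for t
    using u v borel_measurable_nn_integral_fiber[OF u] by (simp_all only: borel_prod)
  define g where "g = (\<lambda>(x,t,y0,y1). fiber_coupling (u t) (v t) x y0 y1)"
  have "g = (\<lambda>(x,t,y0,y1).
      if t then fiber_coupling (u True) (v True) x y0 y1 else fiber_coupling (u False) (v False) x y0 y1)"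
    by (simp add: g_def fun_eq_iff)
  then have [measurable]: "g \<in> borel_measurable (lborel \<Otimes>\<^sub>M (count_space UNIV \<Otimes>\<^sub>M (lborel \<Otimes>\<^sub>M lborel)))"
    unfolding fiber_coupling_def Let_def by simp
  have arm_set[measurable]: "arm_set t s A \<in> sets (lborel \<Otimes>\<^sub>M (count_space UNIV \<Otimes>\<^sub>M (lborel \<Otimes>\<^sub>M lborel)))"
    for s
    using arm_set_sets[OF A] by (simp add: sets_obs_space)
  have "emeasure (coupled_obs u v) (arm_set t s A)
    = (\<integral>\<^sup>+x. \<integral>\<^sup>+y0. \<integral>\<^sup>+y1. indicator A (x, if s then y1 else y0) * fiber_coupling (u t) (v t) x y0 y1
        \<partial>lborel \<partial>lborel \<partial>lborel)" for s
  proof -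
    have "emeasure (coupled_obs u v) (arm_set t s A)
      = (\<integral>\<^sup>+\<omega>. g \<omega> * indicator (arm_set t s A) \<omega> \<partial>(lborel \<Otimes>\<^sub>M (count_space UNIV \<Otimes>\<^sub>M (lborel \<Otimes>\<^sub>M lborel))))"
      unfolding coupled_obs_def g_def[symmetric] by (rule emeasure_density) measurable
    also have "\<dots> = (\<integral>\<^sup>+x. \<integral>\<^sup>+y0. \<integral>\<^sup>+y1. indicator A (x, if s then y1 else y0)
        * fiber_coupling (u t) (v t) x y0 y1 \<partial>lborel \<partial>lborel \<partial>lborel)"
      by (subst nn_integral_lborel_bool_pair, measurable)
         (cases t; intro nn_integral_cong; simp add: g_def arm_set_def xy_def indicator_def mult.commute)
    finally show ?thesis .
  qed
  then show "emeasure (coupled_obs u v) (arm_set t False A) = (\<integral>\<^sup>+z\<in>A. u t z \<partial>lborel)"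
    and "emeasure (coupled_obs u v) (arm_set t True A) = (\<integral>\<^sup>+z\<in>A. v t z \<partial>lborel)"
    using fiber_coupling_marginals[OF u v A eq fin] by simp_all
qed

lemma exists_obs_with_gps_dens:
  fixes q Q ph Ph :: "('d::finite) cofun"
  assumes q: "q \<in> borel_measurable borel" "\<And>z. 0 \<le> q z" "\<And>z. q z \<le> 1"
    and ph: "ph \<in> borel_measurable borel" "\<And>z. 0 \<le> ph z" "\<And>z. ph z \<le> 1"
    and Q: "is_density Q" "integrable (dist_of Q) snd"
    and Ph: "is_density Ph" "integrable (dist_of Ph) snd"
    and control: "AE x in lborel. (\<integral>\<^sup>+y. ennreal (q (x,y) * Q (x,y)) \<partial>lborel)
      = (\<integral>\<^sup>+y. ennreal ((1 - ph (x,y)) * Ph (x,y)) \<partial>lborel)"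
    and treated: "AE x in lborel. (\<integral>\<^sup>+y. ennreal ((1 - q (x,y)) * Q (x,y)) \<partial>lborel)
      = (\<integral>\<^sup>+y. ennreal (ph (x,y) * Ph (x,y)) \<partial>lborel)"
  obtains D where "valid_obs D" "gps_dens D False q Q" "gps_dens D True ph Ph"
proof -
  note [measurable] = is_density_measurable[OF Q(1)] is_density_measurable[OF Ph(1)]
  note Q_nonneg = is_density_nonneg[OF Q(1)] and Ph_nonneg = is_density_nonneg[OF Ph(1)]
  note q(1)[measurable] ph(1)[measurable]
  define u where "u t z = ennreal (if t then (1 - q z) * Q z else q z * Q z)" for t z
  define v where "v t z = ennreal (if t then ph z * Ph z else (1 - ph z) * Ph z)" for t z
  define D where "D = coupled_obs u v"
  have sets: "sets D = sets obs_space"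
    by (simp add: D_def sets_coupled_obs)
  have uv_meas: "u t \<in> borel_measurable borel" "v t \<in> borel_measurable borel" for t
    unfolding u_def v_def by measurable
  have fiber_eq: "AE x in lborel. (\<integral>\<^sup>+y. u t (x,y) \<partial>lborel) = (\<integral>\<^sup>+y. v t (x,y) \<partial>lborel)" for t
    using control treated by (cases t) (simp_all add: u_def v_def)
  have fiber_finite: "AE x in lborel. (\<integral>\<^sup>+y. u t (x,y) \<partial>lborel) \<noteq> \<top>" for t
  proof (rule AE_fiber_nn_integral_finite[OF uv_meas(1)])
    have "(\<integral>\<^sup>+z. u t z \<partial>lborel) \<le> (\<integral>\<^sup>+z. ennreal (Q z) \<partial>lborel)"
      using q Q_nonneg by (intro nn_integral_mono) (simp add: u_def mult_left_le_one_le)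
    then show "(\<integral>\<^sup>+z. u t z \<partial>lborel) \<noteq> \<top>"
      using Q by (auto simp: is_density_def top_unique)
  qed
  note arms = emeasure_coupled_obs[of u v, OF uv_meas fiber_eq fiber_finite, folded D_def]
  have "(\<integral>\<^sup>+z\<in>A. ennreal (Q z) \<partial>lborel)
      = (\<integral>\<^sup>+z\<in>A. ennreal (q z * Q z) \<partial>lborel) + (\<integral>\<^sup>+z\<in>A. ennreal ((1 - q z) * Q z) \<partial>lborel)"
    "(\<integral>\<^sup>+z\<in>A. ennreal (Ph z) \<partial>lborel)
      = (\<integral>\<^sup>+z\<in>A. ennreal (ph z * Ph z) \<partial>lborel) + (\<integral>\<^sup>+z\<in>A. ennreal ((1 - ph z) * Ph z) \<partial>lborel)"
    if "A \<in> sets borel" for A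
    using that q ph Q_nonneg Ph_nonneg by (intro nn_integral_split_propensity; simp)+
  then have distr_Q: "distr D lborel (xy False) = dist_of Q"
    and distr_Ph: "distr D lborel (xy True) = dist_of Ph"
    using Q(1) Ph(1) by (intro distr_xy_eq_dist_ofI[OF sets]; simp add: arms u_def v_def add.commute)+
  have "valid_obs D"
    using sets Q distr_Q Ph distr_Ph by (rule valid_obsI)
  moreover have "gps_dens D False q Q"
    using Q(1) q by (intro gps_densI[OF sets _ distr_Q]) (simp_all add: arms u_def)
  moreover have "gps_dens D True ph Ph"
    using Ph(1) ph by (intro gps_densI[OF sets _ distr_Ph]) (simp_all add: arms v_def)
  ultimately show thesis
    using that by blast
qed

lemma exists_obs_replacing_control_arm:
  fixes p P ph Ph q Q :: "('d::finite) cofun"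
  assumes DP: "valid_obs DP" and g0: "gps_dens DP False p P" and g1: "gps_dens DP True ph Ph"
    and ph: "\<And>z. 0 \<le> ph z" "\<And>z. ph z \<le> 1"
    and q: "q \<in> borel_measurable borel" "\<And>z. 0 \<le> q z" "\<And>z. q z \<le> 1"
    and Q: "is_density Q" "integrable (dist_of Q) snd"
    and marg: "marg Q = marg P"
    and ae: "AE z in lborel. p z * P z = q z * Q z"
  obtains D where "valid_obs D" "gps_dens D False q Q" "gps_dens D True ph Ph"
proof -
  have sets: "sets DP = sets obs_space"
    using DP by (simp add: valid_obs_def)
  have Ph: "is_density Ph" "distr DP lborel (xy True) = dist_of Ph"
    and ph_meas: "ph \<in> borel_measurable borel"
    using g1 by (simp_all add: gps_dens_def)
  have P: "distr DP lborel (xy False) = dist_of P"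
    using g0 by (simp add: gps_dens_def)
  have Ph_int: "integrable (dist_of Ph) snd"
    using DP by (simp add: integrable_dist_of_snd_iff[OF sets Ph(2)] valid_obs_def snd_xy)
  note [measurable] = q(1) ph_meas is_density_measurable[OF Q(1)] is_density_measurable[OF Ph(1)]
  have same_control: "(\<integral>\<^sup>+z\<in>A. ennreal (p z * P z) \<partial>lborel) = (\<integral>\<^sup>+z\<in>A. ennreal (q z * Q z) \<partial>lborel)"
    for A
    by (rule nn_integral_cong_AE) (use ae in \<open>auto elim: eventually_mono\<close>)
  have "AE x in lborel. (\<integral>\<^sup>+y. ennreal (q (x,y) * Q (x,y)) \<partial>lborel)
      = (\<integral>\<^sup>+y. ennreal ((1 - ph (x,y)) * Ph (x,y)) \<partial>lborel)"
    using set_nn_integral_arm_complement[OF DP g0 g1 ph] same_control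
    by (intro AE_fiber_nn_integral_eq) simp_all
  moreover have "AE x in lborel. (\<integral>\<^sup>+y. ennreal ((1 - q (x,y)) * Q (x,y)) \<partial>lborel)
      = (\<integral>\<^sup>+y. ennreal (ph (x,y) * Ph (x,y)) \<partial>lborel)"
  proof (rule AE_fiber_nn_integral_eq)
    fix B :: "(real^'d) set" assume B: "B \<in> sets borel"
    then have BU: "B \<times> UNIV \<in> sets (borel :: ((real^'d) \<times> real) measure)"
      by (rule sets_borel_Times_UNIV)
    have "(\<integral>\<^sup>+z\<in>B \<times> UNIV. ennreal (q z * Q z) \<partial>lborel) + (\<integral>\<^sup>+z\<in>B \<times> UNIV. ennreal ((1 - q z) * Q z) \<partial>lborel)
      = emeasure (marg Q) B"
      using nn_integral_split_propensity[of q lborel Q "B \<times> UNIV"] q BU is_density_nonneg[OF Q(1)]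
        is_density_measurable[OF Q(1)] emeasure_marg[OF Q(1) B]
      by simp
    also have "\<dots> = (\<integral>\<^sup>+z\<in>B \<times> UNIV. ennreal (q z * Q z) \<partial>lborel)
      + (\<integral>\<^sup>+z\<in>B \<times> UNIV. ennreal (ph z * Ph z) \<partial>lborel)"
      unfolding marg emeasure_marg_arms[OF sets P g0 g1 B] same_control ..
    finally show "(\<integral>\<^sup>+z\<in>B \<times> UNIV. ennreal ((1 - q z) * Q z) \<partial>lborel)
      = (\<integral>\<^sup>+z\<in>B \<times> UNIV. ennreal (ph z * Ph z) \<partial>lborel)"
      using set_nn_integral_gps_dens_finite[OF DP g0 BU] same_control
      by (simp add: ennreal_add_left_cancel)
  qed simp_all
  ultimately show thesis
    using exists_obs_with_gps_dens[OF q ph_meas ph Q Ph(1) Ph_int] that by blast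
qed

lemma not_ate_identifiable_if_condition_fails:
  fixes PP DD :: "('d::finite) cofun set"
  assumes PP: "\<forall>p\<in>PP. \<forall>z. 0 \<le> p z \<and> p z \<le> 1"
    and cP: "compatible PP DD p P" and cQ: "compatible PP DD q Q"
    and means: "mean_outcome P \<noteq> mean_outcome Q" and marg: "marg P = marg Q"
    and on_msupp: "AE z in lborel. z \<in> msupp (marg P) \<times> UNIV \<longrightarrow> p z * P z = q z * Q z"
  shows "\<not> ate_identifiable PP DD"
proof
  assume "ate_identifiable PP DD"
  then obtain F where F: "\<And>D. realizable PP DD D \<Longrightarrow> F (censor D) = ate D"
    unfolding ate_identifiable_def by blast
  obtain ph Ph DP where in_classes: "p \<in> PP" "P \<in> DD" "ph \<in> PP" "Ph \<in> DD" and DP: "valid_obs DP"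
    and g0: "gps_dens DP False p P" and g1: "gps_dens DP True ph Ph"
    using cP unfolding compatible_def by blast
  obtain DQ where "q \<in> PP" "Q \<in> DD" and DQ: "valid_obs DQ" and gQ: "gps_dens DQ False q Q"
    using cQ unfolding compatible_def by blast
  have bounds: "0 \<le> q z" "q z \<le> 1" "0 \<le> ph z" "ph z \<le> 1" for z
    using PP \<open>q \<in> PP\<close> \<open>ph \<in> PP\<close> by blast+
  have Q: "is_density Q" "distr DQ lborel (xy False) = dist_of Q" "q \<in> borel_measurable borel"
    using gQ by (simp_all add: gps_dens_def)
  have "integrable (dist_of Q) snd"
    using DQ by (simp add: integrable_dist_of_snd_iff[OF _ Q(2)] valid_obs_def snd_xy)
  moreover have ae: "AE z in lborel. p z * P z = q z * Q z"
    using g0 Q(1) marg on_msupp by (intro AE_eq_if_AE_eq_on_msupp) (simp_all add: gps_dens_def)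
  ultimately obtain D where D: "valid_obs D"
    and gD0: "gps_dens D False q Q" and gD1: "gps_dens D True ph Ph"
    using exists_obs_replacing_control_arm[OF DP g0 g1 bounds(3,4) Q(3) bounds(1,2) Q(1)] marg by metis
  have "(\<integral>\<^sup>+z\<in>A. ennreal (q z * Q z) \<partial>lborel) = (\<integral>\<^sup>+z\<in>A. ennreal (p z * P z) \<partial>lborel)" for A
    by (rule nn_integral_cong_AE) (use ae in \<open>auto elim: eventually_mono\<close>)
  then have "censor D = censor DP"
    using D DP gD0 gD1 g0 g1
    by (auto simp: censor_eq_iff_arm_sets_eq emeasure_arm_set_gps_dens all_bool_eq valid_obs_def)
  then have "ate D = ate DP"
    using F D DP gD0 gD1 g0 g1 in_classes \<open>q \<in> PP\<close> \<open>Q \<in> DD\<close> unfolding realizable_def by metis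
  moreover have "ate D = mean_outcome Ph - mean_outcome Q" "ate DP = mean_outcome Ph - mean_outcome P"
    using ate_eq_mean_outcome_diff[OF D] ate_eq_mean_outcome_diff[OF DP] gD0 gD1 g0 g1
    by (simp_all add: gps_dens_def)
  ultimately show False
    using means by simp
qed

lemma identifiability_condition_if_ate_identifiable:
  fixes PP DD :: "('d::finite) cofun set"
  assumes "\<forall>p\<in>PP. \<forall>z. 0 \<le> p z \<and> p z \<le> 1" and "ate_identifiable PP DD"
  shows "identifiability_condition PP DD"
  unfolding identifiability_condition_def
  using not_ate_identifiable_if_condition_fails[OF assms(1)] assms(2) by blast

theorem theorem1p1:
  fixes PP DD :: "('d::finite) cofun set"
  assumes "\<forall>p\<in>PP. \<forall>z. 0 \<le> p z \<and> p z \<le> 1"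
    and "\<forall>P\<in>DD. is_density P"
  shows "ate_identifiable PP DD \<longleftrightarrow> identifiability_condition PP DD"
proof -
  show ?thesis
    using ate_identifiable_if_identifiability_condition[OF assms(1)]
      identifiability_condition_if_ate_identifiable[OF assms(1)] by blast
qed

end
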